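(* Let $(X,d,\preceq)$ be an ordered metric space such that $(X,d)$ is complete, and let $f,g:X\to X$. Suppose: (i) $f(X)\subseteq g(X)$; (ii) $f$ is $g$-comparable; (iii) the pair $(f,g)$ is commuting (i.e. $g(f(x))=f(g(x))$ for all $x\in X$), or alternatively weakly commuting (i.e. $d(gfx,fgx)\le d(gx,fx)$ for all $x\in X$); (iv) $g$ is continuous; (v) either $f$ is continuous or $(X,d,\preceq)$ has the $g$-TCC property; (vi) there exists $x_0\in X$ with $g(x_0)\prec\succ f(x_0)$; (vii) there exists $\alpha\in[0,1)$ with $d(fx,fy)\le\alpha\, d(gx,gy)$ for all $x,y\in X$ with $g(x)\prec\succ g(y)$. Then $f$ and $g$ have a coincidence point.
   Context: An ordered metric space $(X,d,\preceq)$ is a nonempty set $X$ with a metric $d$ and a partial order $\preceq$. For $x,y\in X$, write $x\prec\succ y$ if $x\preceq y$ or $y\preceq x$. For self-maps $f,g$ of $X$: $f$ is $g$-comparable if for all $x,y\in X$, $g(x)\prec\succ g(y)$ implies $f(x)\prec\succ f(y)$. A sequence $\{x_n\}$ is termwise monotone if $x_n\prec\succ x_{n+1}$ for all $n\ge0$. $(X,d,\preceq)$ has the $g$-TCC property if for every termwise monotone sequence $\{x_n\}$ in $X$ converging to some $x\in X$ there is a subsequence $\{x_{n_k}\}$ with $g(x_{n_k})\prec\succ g(x)$ for all $k$. A coincidence point of $f,g$ is $x\in X$ with $g(x)=f(x)$. *)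

theory Defs
  imports "HOL-Analysis.Analysis"
begin

definition comparable :: "('a \<Rightarrow> 'a \<Rightarrow> bool) \<Rightarrow> 'a \<Rightarrow> 'a \<Rightarrow> bool" where
  "comparable le x y \<longleftrightarrow> le x y \<or> le y x"

definition g_comparable :: "('a \<Rightarrow> 'a \<Rightarrow> bool) \<Rightarrow> ('a \<Rightarrow> 'a) \<Rightarrow> ('a \<Rightarrow> 'a) \<Rightarrow> bool" where
  "g_comparable le f g \<longleftrightarrow>
     (\<forall>x y. comparable le (g x) (g y) \<longrightarrow> comparable le (f x) (f y))"

definition termwise_monotone :: "('a \<Rightarrow> 'a \<Rightarrow> bool) \<Rightarrow> (nat \<Rightarrow> 'a) \<Rightarrow> bool" where
  "termwise_monotone le xs \<longleftrightarrow> (\<forall>n. comparable le (xs n) (xs (Suc n)))"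

definition g_TCC :: "('a::metric_space \<Rightarrow> 'a \<Rightarrow> bool) \<Rightarrow> ('a \<Rightarrow> 'a) \<Rightarrow> bool" where
  "g_TCC le g \<longleftrightarrow>
     (\<forall>(xs::nat \<Rightarrow> 'a) (x::'a). termwise_monotone le xs \<and> (xs \<longlonglongrightarrow> x) \<longrightarrow>
        (\<exists>r::nat \<Rightarrow> nat. strict_mono r \<and> (\<forall>k. comparable le (g (xs (r k))) (g x))))"

definition coincidence_point :: "('a \<Rightarrow> 'a) \<Rightarrow> ('a \<Rightarrow> 'a) \<Rightarrow> 'a \<Rightarrow> bool" where
  "coincidence_point f g x \<longleftrightarrow> g x = f x"

end

theory Submission
  imports Defs
begin

text \<open>Starting from \<open>x\<^sub>0\<close>, the inclusion \<open>f(X) \<subseteq> g(X)\<close> yields a Jungck sequence with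
  \<open>g x\<^sub>n\<^sub>+\<^sub>1 = f x\<^sub>n\<close>. By \<open>g\<close>-comparability consecutive terms \<open>g x\<^sub>n\<close> are comparable, so the
  contraction condition applies to them and \<open>g x\<^sub>n\<close> is Cauchy, with limit \<open>z\<close>.
  Weak commutativity and continuity of \<open>g\<close> give \<open>f (g x\<^sub>n) \<longrightarrow> g z\<close>; continuity of \<open>f\<close>,
  or the \<open>g\<close>-TCC property together with the contraction condition, gives
  \<open>f (g x\<^sub>n\<^sub>k) \<longrightarrow> f z\<close> along a subsequence. Hence \<open>g z = f z\<close>.\<close>

lemma dist_le_sum_dist_Suc:
  fixes z :: "nat \<Rightarrow> 'a::metric_space"
  assumes "m \<le> n"
  shows "dist (z m) (z n) \<le> (\<Sum>k = m..<n. dist (z k) (z (Suc k)))"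
  using assms
proof (induction n rule: dec_induct)
  case (step n)
  have "dist (z m) (z (Suc n)) \<le> dist (z m) (z n) + dist (z n) (z (Suc n))"
    by (rule dist_triangle)
  with step show ?case by simp
qed simp

lemma Cauchy_if_summable_dist_Suc:
  fixes z :: "nat \<Rightarrow> 'a::metric_space"
  assumes "summable (\<lambda>n. dist (z n) (z (Suc n)))"
  shows "Cauchy z"
proof (rule metric_CauchyI)
  fix e :: real
  assume "0 < e"
  then obtain N where N: "\<And>m n. N \<le> m \<Longrightarrow> norm (\<Sum>k = m..<n. dist (z k) (z (Suc k))) < e"
    using assms unfolding summable_Cauchy by blast
  have "dist (z m) (z n) < e" if "N \<le> m" "m \<le> n" for m n
    using dist_le_sum_dist_Suc[OF \<open>m \<le> n\<close>, of z] N[OF \<open>N \<le> m\<close>, of n]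
    by (simp add: sum_nonneg)
  then show "\<exists>N. \<forall>m\<ge>N. \<forall>n\<ge>N. dist (z m) (z n) < e"
    by (metis dist_commute nle_le order_trans)
qed

lemma Cauchy_if_dist_Suc_contracts:
  fixes z :: "nat \<Rightarrow> 'a::metric_space"
  assumes "0 \<le> c" "c < 1"
    and contr: "\<And>n. dist (z (Suc n)) (z (Suc (Suc n))) \<le> c * dist (z n) (z (Suc n))"
  shows "Cauchy z"
proof (rule Cauchy_if_summable_dist_Suc)
  have bound: "dist (z n) (z (Suc n)) \<le> dist (z 0) (z 1) * c ^ n" for n
  proof (induction n)
    case (Suc n)
    then show ?case
      using contr[of n] mult_left_mono[OF Suc \<open>0 \<le> c\<close>] by (simp add: algebra_simps)
  qed simp
  show "summable (\<lambda>n. dist (z n) (z (Suc n)))"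
    by (rule summable_comparison_test[OF _ summable_mult[OF summable_geometric]])
       (use bound assms in auto)
qed

definition weakly_commuting :: "('a::metric_space \<Rightarrow> 'a) \<Rightarrow> ('a \<Rightarrow> 'a) \<Rightarrow> bool" where
  "weakly_commuting f g \<longleftrightarrow> (\<forall>x. dist (g (f x)) (f (g x)) \<le> dist (g x) (f x))"

definition ordered_g_contraction ::
    "('a \<Rightarrow> 'a \<Rightarrow> bool) \<Rightarrow> real \<Rightarrow> ('a::metric_space \<Rightarrow> 'a) \<Rightarrow> ('a \<Rightarrow> 'a) \<Rightarrow> bool" where
  "ordered_g_contraction le \<alpha> f g \<longleftrightarrow>
     (\<forall>x y. comparable le (g x) (g y) \<longrightarrow> dist (f x) (f y) \<le> \<alpha> * dist (g x) (g y))"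

lemma commuting_imp_weakly_commuting:
  assumes "\<And>x. g (f x) = f (g x)"
  shows "weakly_commuting f g"
  using assms by (simp add: weakly_commuting_def)

lemma Jungck_sequence_exists:
  assumes "range f \<subseteq> range g"
  obtains x where "x 0 = a" "\<And>n. g (x (Suc n)) = f (x n)"
proof -
  have "\<forall>y. \<exists>x. g x = f y"
    using assms by (metis rangeI subsetD imageE)
  then obtain h where h: "\<And>y. g (h y) = f y"
    by metis
  show thesis
    by (rule that[of "\<lambda>n. (h ^^ n) a"]) (simp_all add: h)
qed

lemma Jungck_sequence_termwise_monotone:
  assumes "g_comparable le f g"
    and "comparable le (g (x 0)) (f (x 0))"
    and step: "\<And>n. g (x (Suc n)) = f (x n)"
  shows "termwise_monotone le (\<lambda>n. g (x n))"
  unfolding termwise_monotone_def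
proof
  fix n show "comparable le (g (x n)) (g (x (Suc n)))"
  proof (induction n)
    case 0
    show ?case
      using assms(2) by (simp only: step)
  next
    case (Suc n)
    then have "comparable le (f (x n)) (f (x (Suc n)))"
      using assms(1) unfolding g_comparable_def by blast
    then show ?case
      by (simp only: step)
  qed
qed

lemma Jungck_sequence_Cauchy:
  assumes "ordered_g_contraction le \<alpha> f g" "0 \<le> \<alpha>" "\<alpha> < 1"
    and "termwise_monotone le (\<lambda>n. g (x n))"
    and step: "\<And>n. g (x (Suc n)) = f (x n)"
  shows "Cauchy (\<lambda>n. g (x n))"
proof (rule Cauchy_if_dist_Suc_contracts[OF \<open>0 \<le> \<alpha>\<close> \<open>\<alpha> < 1\<close>])
  fix n
  have "comparable le (g (x n)) (g (x (Suc n)))"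
    using assms(4) by (simp add: termwise_monotone_def)
  then have "dist (f (x n)) (f (x (Suc n))) \<le> \<alpha> * dist (g (x n)) (g (x (Suc n)))"
    using assms(1) unfolding ordered_g_contraction_def by blast
  then show "dist (g (x (Suc n))) (g (x (Suc (Suc n)))) \<le> \<alpha> * dist (g (x n)) (g (x (Suc n)))"
    by (simp only: step)
qed

lemma ordered_g_contraction_tendsto:
  assumes "ordered_g_contraction le \<alpha> f g"
    and "\<And>k. comparable le (g (u k)) (g z)"
    and "(\<lambda>k. g (u k)) \<longlonglongrightarrow> g z"
  shows "(\<lambda>k. f (u k)) \<longlonglongrightarrow> f z"
proof -
  have "\<forall>k. norm (dist (f (u k)) (f z)) \<le> \<alpha> * dist (g (u k)) (g z)"
    using assms(1,2) unfolding ordered_g_contraction_def by simp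
  moreover have "(\<lambda>k. \<alpha> * dist (g (u k)) (g z)) \<longlonglongrightarrow> 0"
    using tendsto_mult_right_zero[OF assms(3)[THEN tendsto_dist_iff[THEN iffD1]]] .
  ultimately have "(\<lambda>k. dist (f (u k)) (f z)) \<longlonglongrightarrow> 0"
    by (rule Lim_null_comparison[OF always_eventually])
  then show ?thesis
    by (rule tendsto_dist_iff[THEN iffD2])
qed

lemma subseq_tendsto_if_continuous_or_g_TCC:
  assumes "ordered_g_contraction le \<alpha> f g"
    and "continuous_on UNIV g"
    and "continuous_on UNIV f \<or> g_TCC le g"
    and "termwise_monotone le y" "y \<longlonglongrightarrow> z"
  obtains r where "strict_mono r" "(\<lambda>k. f (y (r k))) \<longlonglongrightarrow> f z"
proof (cases "continuous_on UNIV f")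
  case True
  have "(\<lambda>k. f (y k)) \<longlonglongrightarrow> f z"
    using continuous_on_tendsto_compose[OF True assms(5)] by simp
  then show thesis
    using that[of id] by (simp add: strict_mono_id)
next
  case False
  then have "g_TCC le g"
    using assms(3) by blast
  then obtain r :: "nat \<Rightarrow> nat"
    where r: "strict_mono r" and comp: "\<And>k. comparable le (g (y (r k))) (g z)"
    using assms(4,5) unfolding g_TCC_def by blast
  have "(\<lambda>k. y (r k)) \<longlonglongrightarrow> z"
    using LIMSEQ_subseq_LIMSEQ[OF assms(5) r] by (simp add: o_def)
  then have "(\<lambda>k. g (y (r k))) \<longlonglongrightarrow> g z"
    using continuous_on_tendsto_compose[OF assms(2)] by simp
  then have "(\<lambda>k. f (y (r k))) \<longlonglongrightarrow> f z"
    by (rule ordered_g_contraction_tendsto[OF assms(1) comp])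
  with r show thesis
    by (rule that)
qed

lemma weakly_commuting_Jungck_sequence_tendsto:
  assumes "weakly_commuting f g" "continuous_on UNIV g"
    and step: "\<And>n. g (x (Suc n)) = f (x n)"
    and lim: "(\<lambda>n. g (x n)) \<longlonglongrightarrow> z"
  shows "(\<lambda>n. f (g (x n))) \<longlonglongrightarrow> g z"
proof -
  have lim_Suc: "(\<lambda>n. g (x (Suc n))) \<longlonglongrightarrow> z"
    using LIMSEQ_Suc[OF lim] .
  have bound: "\<forall>n. norm (dist (f (g (x n))) (g z))
      \<le> dist (g (x n)) (g (x (Suc n))) + dist (g (g (x (Suc n)))) (g z)"
  proof
    fix n
    have "dist (f (g (x n))) (g (f (x n))) \<le> dist (g (x n)) (g (x (Suc n)))"
      using assms(1) by (simp add: weakly_commuting_def dist_commute step)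
    then show "norm (dist (f (g (x n))) (g z))
        \<le> dist (g (x n)) (g (x (Suc n))) + dist (g (g (x (Suc n)))) (g z)"
      using dist_triangle[of "f (g (x n))" "g z" "g (f (x n))"] by (simp add: step)
  qed
  have "(\<lambda>n. dist (g (x n)) (g (x (Suc n)))) \<longlonglongrightarrow> 0"
    using tendsto_dist[OF lim lim_Suc] by simp
  moreover have "(\<lambda>n. g (g (x (Suc n)))) \<longlonglongrightarrow> g z"
    using continuous_on_tendsto_compose[OF assms(2) lim_Suc] by simp
  then have "(\<lambda>n. dist (g (g (x (Suc n)))) (g z)) \<longlonglongrightarrow> 0"
    by (rule tendsto_dist_iff[THEN iffD1])
  ultimately have "(\<lambda>n. dist (g (x n)) (g (x (Suc n))) + dist (g (g (x (Suc n)))) (g z)) \<longlonglongrightarrow> 0"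
    by (rule tendsto_add_zero)
  with bound have "(\<lambda>n. dist (f (g (x n))) (g z)) \<longlonglongrightarrow> 0"
    by (rule Lim_null_comparison[OF always_eventually])
  then show ?thesis
    by (rule tendsto_dist_iff[THEN iffD2])
qed

theorem corollary3p4:
  fixes le :: "'a::complete_space \<Rightarrow> 'a \<Rightarrow> bool"
    and f g :: "'a \<Rightarrow> 'a"
  assumes "reflp le" "antisymp le" "transp le"
    and i: "range f \<subseteq> range g"
    and ii: "g_comparable le f g"
    and iii: "(\<forall>x. g (f x) = f (g x)) \<or> (\<forall>x. dist (g (f x)) (f (g x)) \<le> dist (g x) (f x))"
    and iv: "continuous_on UNIV g"
    and v: "continuous_on UNIV f \<or> g_TCC le g"
    and vi: "\<exists>x0. comparable le (g x0) (f x0)"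
    and vii: "\<exists>\<alpha>::real. 0 \<le> \<alpha> \<and> \<alpha> < 1 \<and>
               (\<forall>x y. comparable le (g x) (g y) \<longrightarrow> dist (f x) (f y) \<le> \<alpha> * dist (g x) (g y))"
  shows "\<exists>x. coincidence_point f g x"
proof -
  obtain \<alpha> where "0 \<le> \<alpha>" "\<alpha> < 1" and contr: "ordered_g_contraction le \<alpha> f g"
    using vii unfolding ordered_g_contraction_def by blast
  have wc: "weakly_commuting f g"
    using iii commuting_imp_weakly_commuting unfolding weakly_commuting_def by blast
  obtain x0 where x0: "comparable le (g x0) (f x0)"
    using vi by blast
  obtain x where "x 0 = x0" and step: "\<And>n. g (x (Suc n)) = f (x n)"
    using Jungck_sequence_exists[OF i, of x0] by blast
  with x0 have mono: "termwise_monotone le (\<lambda>n. g (x n))"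
    using Jungck_sequence_termwise_monotone[OF ii] by blast
  obtain z where lim: "(\<lambda>n. g (x n)) \<longlonglongrightarrow> z"
    using Jungck_sequence_Cauchy[OF contr \<open>0 \<le> \<alpha>\<close> \<open>\<alpha> < 1\<close> mono step]
    unfolding Cauchy_convergent_iff convergent_def by blast
  obtain r where r: "strict_mono r" and lim_f: "(\<lambda>k. f (g (x (r k)))) \<longlonglongrightarrow> f z"
    using subseq_tendsto_if_continuous_or_g_TCC[OF contr iv v mono lim] by blast
  have "(\<lambda>k. f (g (x (r k)))) \<longlonglongrightarrow> g z"
    using LIMSEQ_subseq_LIMSEQ[OF weakly_commuting_Jungck_sequence_tendsto[OF wc iv step lim] r]
    by (simp add: o_def)
  with lim_f have "g z = f z"
    using LIMSEQ_unique by blast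
  then show ?thesis
    unfolding coincidence_point_def by blast
qed

end
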